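(* Let $\mathcal{D}=(\Omega,\mathcal{B})$ be a supersimple $2$-$(n,4,\lambda)$ design satisfying property $(\triangle)$, such that $(\Omega,\mathcal{C})$ is a regular two-graph where $\mathcal{C}$ is the set of collinear triples, and let $\mathcal{E}:=\{[a,b]\mid a,b\in\Omega\}$. Then $[x,y]^g=[x^g,y^g]$ for all $g\in\langle\mathcal{E}\rangle$ and all $x,y\in\Omega$.
   Context: A $2$-$(n,4,\lambda)$ design $(\Omega,\mathcal{B})$: $n$ points, a multiset of $4$-subsets (lines), every $2$-subset in exactly $\lambda$ lines; supersimple: distinct lines meet in at most two points. For distinct $a,b$ with lines $\{a,b,a_i,b_i\}$ through them, $[a,b]:=(a,b)\prod_i(a_i,b_i)\in\operatorname{Sym}(\Omega)$; $[a,a]:=1$. Permutations act on the right, products composed left to right, $g^h=h^{-1}gh$. Property $(\triangle)$: if $B_1,B_2\in\mathcal{B}$ with $|B_1\cap B_2|=2$ then $B_1\triangle B_2\in\mathcal{B}$. Regular two-graph: $(\Omega,\mathcal{C})$ is a $2$-$(n,3,\mu)$ design with every $4$-subset containing $0,2$ or $4$ members of $\mathcal{C}$. *)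

theory Defs
  imports Main
begin

definition two_design :: "'a set \<Rightarrow> nat \<Rightarrow> 'a set set \<Rightarrow> nat \<Rightarrow> bool" where
  "two_design Omega k Bs lam \<longleftrightarrow>
     finite Omega \<and>
     (\<forall>B\<in>Bs. B \<subseteq> Omega \<and> card B = k) \<and>
     (\<forall>P. P \<subseteq> Omega \<longrightarrow> card P = 2 \<longrightarrow> card {B\<in>Bs. P \<subseteq> B} = lam)"

definition supersimple :: "'a set set \<Rightarrow> bool" where
  "supersimple Bs \<longleftrightarrow> (\<forall>B1\<in>Bs. \<forall>B2\<in>Bs. B1 \<noteq> B2 \<longrightarrow> card (B1 \<inter> B2) \<le> 2)"

definition prop_triangle :: "'a set set \<Rightarrow> bool" where
  "prop_triangle Bs \<longleftrightarrow>
     (\<forall>B1\<in>Bs. \<forall>B2\<in>Bs. card (B1 \<inter> B2) = 2 \<longrightarrow> (B1 - B2) \<union> (B2 - B1) \<in> Bs)"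

definition collinear_triples :: "'a set set \<Rightarrow> 'a set set" where
  "collinear_triples Bs = {T. card T = 3 \<and> (\<exists>B\<in>Bs. T \<subseteq> B)}"

definition regular_two_graph :: "'a set \<Rightarrow> 'a set set \<Rightarrow> bool" where
  "regular_two_graph Omega Cs \<longleftrightarrow>
     (\<exists>mu. two_design Omega 3 Cs mu) \<and>
     (\<forall>F. F \<subseteq> Omega \<longrightarrow> card F = 4 \<longrightarrow> card {T\<in>Cs. T \<subseteq> F} \<in> {0, 2, 4})"

text \<open>The permutation [a,b] = (a,b) prod_i (a_i,b_i), over the lines {a,b,a_i,b_i}
  through a and b; [a,a] = 1.  Written out pointwise (as functions 'a => 'a,
  identity off Omega): it swaps a and b and, for each line L through a and b,
  swaps the two points of L - {a,b}.  In a supersimple design these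
  transpositions are disjoint, so this is exactly the product.\<close>
definition swp :: "'a set set \<Rightarrow> 'a \<Rightarrow> 'a \<Rightarrow> 'a \<Rightarrow> 'a" where
  "swp Bs a b x =
     (if a = b then x
      else if x = a then b
      else if x = b then a
      else if (\<exists>L\<in>Bs. {a, b, x} \<subseteq> L)
        then (THE y. \<exists>L\<in>Bs. {a, b, x} \<subseteq> L \<and> L = {a, b, x, y} \<and> y \<notin> {a, b, x})
      else x)"

text \<open>The subgroup of Sym(Omega) generated by a set E of permutations
  (functions 'a => 'a; all generators considered here are bijections fixing
  everything outside Omega).\<close>
inductive_set gen_group :: "('a \<Rightarrow> 'a) set \<Rightarrow> ('a \<Rightarrow> 'a) set" for E where
  gen_id: "id \<in> gen_group E"
| gen_elem: "e \<in> E \<Longrightarrow> e \<in> gen_group E"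
| gen_comp: "f \<in> gen_group E \<Longrightarrow> g \<in> gen_group E \<Longrightarrow> f \<circ> g \<in> gen_group E"
| gen_inv: "f \<in> gen_group E \<Longrightarrow> inv f \<in> gen_group E"

end

theory Submission
  imports Defs
begin

text \<open>Each [a,b] is an involution, and it is defined from the lines alone, so any
  automorphism g of the design conjugates it to [g a, g b]. It therefore suffices to
  show that every [a,b] maps lines to lines; then all of \<open>\<langle>\<E>\<rangle>\<close> consists of
  automorphisms. For a line M this is a case analysis on how M meets {a,b}: property
  (\<triangle>) produces the candidate image lines as symmetric differences of lines sharing
  two points, and the two-graph condition (every 4-set contains an even number of
  collinear triples) rules out the configurations in which no such line exists.\<close>

definition collinear :: "'a set set \<Rightarrow> 'a set \<Rightarrow> bool" where
  "collinear Bs T \<longleftrightarrow> (\<exists>L\<in>Bs. T \<subseteq> L)"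

definition design_automorphism :: "'a set set \<Rightarrow> ('a \<Rightarrow> 'a) \<Rightarrow> bool" where
  "design_automorphism Bs f \<longleftrightarrow> bij f \<and> (\<forall>L. f ` L \<in> Bs \<longleftrightarrow> L \<in> Bs)"

lemma collinearI: "L \<in> Bs \<Longrightarrow> T \<subseteq> L \<Longrightarrow> collinear Bs T"
  unfolding collinear_def by blast

lemma design_automorphism_bij: "design_automorphism Bs f \<Longrightarrow> bij f"
  by (simp add: design_automorphism_def)

lemma design_automorphism_image: "design_automorphism Bs f \<Longrightarrow> L \<in> Bs \<Longrightarrow> f ` L \<in> Bs"
  by (simp add: design_automorphism_def)

lemma design_automorphism_id: "design_automorphism Bs id"
  by (simp add: design_automorphism_def)

lemma design_automorphism_comp:
  "design_automorphism Bs f \<Longrightarrow> design_automorphism Bs g \<Longrightarrow> design_automorphism Bs (f \<circ> g)"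
  unfolding design_automorphism_def by (metis bij_comp image_comp)

lemma design_automorphism_inv:
  assumes "design_automorphism Bs f"
  shows "design_automorphism Bs (inv f)"
proof -
  have f: "bij f" "\<And>L. f ` L \<in> Bs \<longleftrightarrow> L \<in> Bs" using assms by (auto simp: design_automorphism_def)
  have "f ` (inv f ` L) = L" for L
    using bij_is_surj[OF f(1)] by (simp add: image_comp surj_iff)
  then have "inv f ` L \<in> Bs \<longleftrightarrow> L \<in> Bs" for L using f(2)[of "inv f ` L"] by simp
  then show ?thesis using bij_imp_bij_inv[OF f(1)] by (simp add: design_automorphism_def)
qed

lemma involution_design_automorphism:
  assumes "f \<circ> f = id" "\<And>L. L \<in> Bs \<Longrightarrow> f ` L \<in> Bs"
  shows "design_automorphism Bs f"
proof -
  have "f ` L \<in> Bs \<Longrightarrow> L \<in> Bs" for L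
    using assms(2)[of "f ` L"] by (simp add: image_comp assms(1))
  then show ?thesis
    using assms(2) o_bij[OF assms(1) assms(1)] unfolding design_automorphism_def by blast
qed

lemma gen_group_design_automorphism:
  assumes "\<And>e. e \<in> E \<Longrightarrow> design_automorphism Bs e" "g \<in> gen_group E"
  shows "design_automorphism Bs g"
  using assms(2)
proof induction
  case (gen_comp f g)
  then show ?case using design_automorphism_comp by blast
qed (use assms(1) design_automorphism_id design_automorphism_inv in blast)+

lemma design_automorphism_collinear_iff:
  assumes "design_automorphism Bs f"
  shows "collinear Bs (f ` T) \<longleftrightarrow> collinear Bs T"
proof
  assume "collinear Bs (f ` T)"
  then obtain L where L: "L \<in> Bs" "f ` T \<subseteq> L" unfolding collinear_def by blast
  have "inv f ` L \<in> Bs" using design_automorphism_image[OF design_automorphism_inv[OF assms] L(1)] .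
  moreover have "inj f" using bij_is_inj[OF design_automorphism_bij[OF assms]] .
  then have "T \<subseteq> inv f ` L" using L(2) by (metis image_inv_f_f image_mono)
  ultimately show "collinear Bs T" by (rule collinearI)
next
  assume "collinear Bs T"
  then obtain L where "L \<in> Bs" "T \<subseteq> L" unfolding collinear_def by blast
  then show "collinear Bs (f ` T)"
    using design_automorphism_image[OF assms] by (meson collinearI image_mono)
qed

lemma card3_subset_of_4_cases:
  assumes "T \<subseteq> {w,x,y,z}" "card T = 3" "distinct [w,x,y,z]"
  shows "T = {x,y,z} \<or> T = {w,y,z} \<or> T = {w,x,z} \<or> T = {w,x,y}"
proof -
  have card_F: "card {w,x,y,z} = 4" using assms(3) by simp
  have "\<not> {w,x,y,z} \<subseteq> T"
  proof
    assume "{w,x,y,z} \<subseteq> T"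
    then have "card {w,x,y,z} \<le> card T" using assms(1) by (intro card_mono) (auto intro: finite_subset)
    then show False using card_F assms(2) by simp
  qed
  then obtain e where e: "e \<in> {w,x,y,z}" "e \<notin> T" by blast
  have "T \<subseteq> {w,x,y,z} - {e}" using assms(1) e by auto
  moreover have "card ({w,x,y,z} - {e}) = 3" using e card_F by simp
  ultimately have "T = {w,x,y,z} - {e}" using card_subset_eq[of "{w,x,y,z} - {e}" T] assms(2) by auto
  then show ?thesis using e assms(3) by auto
qed

locale supersimple_block_design =
  fixes Omega :: "'a set" and Bs :: "'a set set"
  assumes block_subset: "\<And>B. B \<in> Bs \<Longrightarrow> B \<subseteq> Omega"
    and block_card: "\<And>B. B \<in> Bs \<Longrightarrow> card B = 4"
    and supersimple: "supersimple Bs"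
begin

lemma block_finite: "B \<in> Bs \<Longrightarrow> finite B"
  using block_card[of B] by (intro card_ge_0_finite) auto

lemma block_eq_if_three_common:
  assumes "L1 \<in> Bs" "L2 \<in> Bs" "x \<noteq> y" "x \<noteq> z" "y \<noteq> z" "{x,y,z} \<subseteq> L1" "{x,y,z} \<subseteq> L2"
  shows "L1 = L2"
proof (rule ccontr)
  assume "L1 \<noteq> L2"
  then have "card (L1 \<inter> L2) \<le> 2" using supersimple assms(1,2) unfolding supersimple_def by blast
  moreover have "card {x,y,z} \<le> card (L1 \<inter> L2)"
    by (rule card_mono) (use block_finite[OF assms(1)] assms in auto)
  ultimately show False using assms(3-5) by simp
qed

lemma block_fourth_point:
  assumes "L \<in> Bs" "{x,y,z} \<subseteq> L" "x \<noteq> y" "x \<noteq> z" "y \<noteq> z"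
  obtains t where "L = {x,y,z,t}" "t \<notin> {x,y,z}"
proof -
  have "card (L - {x,y,z}) = 1"
    using block_card[OF assms(1)] block_finite[OF assms(1)] assms(2-5) by (simp add: card_Diff_subset)
  then obtain t where "L - {x,y,z} = {t}" by (rule card_1_singletonE)
  then have "L = {x,y,z,t}" "t \<notin> {x,y,z}" using assms(2) by auto
  then show ?thesis by (rule that)
qed

lemma block_through_two_points:
  assumes "L \<in> Bs" "a \<in> L" "b \<in> L" "a \<noteq> b"
  obtains p q where "L = {a,b,p,q}" "distinct [a,b,p,q]"
proof -
  have "card (L - {a,b}) = 2"
    using block_card[OF assms(1)] block_finite[OF assms(1)] assms(2-4) by (simp add: card_Diff_subset)
  then obtain p q where "L - {a,b} = {p,q}" "p \<noteq> q" by (auto simp: card_2_iff)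
  then have "L = {a,b,p,q}" "distinct [a,b,p,q]" using assms(2-4) by auto
  then show ?thesis by (rule that)
qed

lemma block_through_point:
  assumes "L \<in> Bs" "a \<in> L"
  obtains p q r where "L = {a,p,q,r}" "distinct [a,p,q,r]"
proof -
  have "card (L - {a}) = 3" using block_card[OF assms(1)] block_finite[OF assms(1)] assms(2) by simp
  then obtain p q r where "L - {a} = {p,q,r}" "p \<noteq> q" "q \<noteq> r" "p \<noteq> r"
    unfolding card_3_iff by blast
  then have "L = {a,p,q,r}" "distinct [a,p,q,r]" using assms(2) by auto
  then show ?thesis by (rule that)
qed

lemma block_elements:
  assumes "L \<in> Bs"
  obtains p q r w where "L = {p,q,r,w}" "distinct [p,q,r,w]"
proof -
  have "L \<noteq> {}" using block_card[OF assms] by auto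
  then obtain p where "p \<in> L" by blast
  then show ?thesis using block_through_point[OF assms] that by metis
qed

lemma swp_refl: "swp Bs a a = id"
  unfolding swp_def by auto

lemma swp_first: "a \<noteq> b \<Longrightarrow> swp Bs a b a = b"
  unfolding swp_def by auto

lemma swp_second: "a \<noteq> b \<Longrightarrow> swp Bs a b b = a"
  unfolding swp_def by auto

lemma swp_not_collinear: "x \<noteq> a \<Longrightarrow> x \<noteq> b \<Longrightarrow> \<not> collinear Bs {a,b,x} \<Longrightarrow> swp Bs a b x = x"
  unfolding swp_def collinear_def by auto

lemma swp_commute: "swp Bs a b = swp Bs b a"
proof
  fix x
  have e: "{b,a,x} = {a,b,x}" "\<And>y. {b,a,x,y} = {a,b,x,y}" by auto
  show "swp Bs a b x = swp Bs b a x"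
  proof (cases "a = b \<or> x = a \<or> x = b")
    case True
    then show ?thesis unfolding swp_def by auto
  next
    case False
    then have "a \<noteq> b" "x \<noteq> a" "x \<noteq> b" "b \<noteq> a" by auto
    then show ?thesis unfolding swp_def by (simp only: e if_False simp_thms)
  qed
qed

lemma swp_collinear_block:
  assumes "a \<noteq> b" "x \<noteq> a" "x \<noteq> b" "collinear Bs {a,b,x}"
  shows "{a,b,x,swp Bs a b x} \<in> Bs" "swp Bs a b x \<notin> {a,b,x}"
proof -
  obtain L where L: "L \<in> Bs" "{a,b,x} \<subseteq> L" using assms(4) unfolding collinear_def by blast
  obtain y where y: "L = {a,b,x,y}" "y \<notin> {a,b,x}"
    by (rule block_fourth_point[OF L]) (use assms in auto)
  have "(THE v. \<exists>L\<in>Bs. {a,b,x} \<subseteq> L \<and> L = {a,b,x,v} \<and> v \<notin> {a,b,x}) = y"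
  proof (rule the_equality)
    show "\<exists>L\<in>Bs. {a,b,x} \<subseteq> L \<and> L = {a,b,x,y} \<and> y \<notin> {a,b,x}" using L y by blast
  next
    fix v assume "\<exists>L\<in>Bs. {a,b,x} \<subseteq> L \<and> L = {a,b,x,v} \<and> v \<notin> {a,b,x}"
    then obtain L' where L': "L' \<in> Bs" "L' = {a,b,x,v}" "v \<notin> {a,b,x}" by blast
    have "L' = L" by (rule block_eq_if_three_common[OF L'(1) L(1), of a b x]) (use assms L L' in auto)
    then show "v = y" using L'(2,3) y by auto
  qed
  moreover have "swp Bs a b x = (THE v. \<exists>L\<in>Bs. {a,b,x} \<subseteq> L \<and> L = {a,b,x,v} \<and> v \<notin> {a,b,x})"
  proof -
    have "\<exists>L\<in>Bs. {a,b,x} \<subseteq> L" using L by blast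
    then show ?thesis unfolding swp_def using assms(1-3) by (simp only: if_False if_True simp_thms)
  qed
  ultimately show "{a,b,x,swp Bs a b x} \<in> Bs" "swp Bs a b x \<notin> {a,b,x}" using L y by simp_all
qed

lemma swp_eq_fourth_point:
  assumes "{a,b,x,y} \<in> Bs" "distinct [a,b,x,y]"
  shows "swp Bs a b x = y"
proof -
  have col: "collinear Bs {a,b,x}" by (rule collinearI[OF assms(1)]) auto
  note moved = swp_collinear_block[OF _ _ _ col]
  have "{a,b,x,y} = {a,b,x,swp Bs a b x}"
    by (rule block_eq_if_three_common[OF assms(1) moved(1), of a b x]) (use assms moved in auto)
  then show ?thesis using moved(2) assms(2) by auto
qed

lemma swp_swp:
  assumes ab: "a \<noteq> b"
  shows "swp Bs a b (swp Bs a b x) = x"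
proof (cases "x = a \<or> x = b \<or> \<not> collinear Bs {a,b,x}")
  case True
  then show ?thesis using ab swp_first swp_second swp_not_collinear by metis
next
  case False
  note moved = swp_collinear_block[OF ab, of x]
  have "{a,b,swp Bs a b x,x} \<in> Bs" using moved False by (simp add: insert_commute)
  then show ?thesis by (rule swp_eq_fourth_point) (use moved False ab in auto)
qed

lemma swp_apply_design_automorphism:
  assumes f: "design_automorphism Bs f"
  shows "swp Bs (f x) (f y) (f z) = f (swp Bs x y z)"
proof -
  have inj: "\<And>u v. f u = f v \<longleftrightarrow> u = v"
    using bij_is_inj[OF design_automorphism_bij[OF f]] by (simp add: inj_eq)
  consider "x = y \<or> z = x \<or> z = y" | "x \<noteq> y" "z \<noteq> x" "z \<noteq> y" "\<not> collinear Bs {x,y,z}"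
    | "x \<noteq> y" "z \<noteq> x" "z \<noteq> y" "collinear Bs {x,y,z}" by blast
  then show ?thesis
  proof cases
    case 1
    then show ?thesis unfolding swp_def using inj by auto
  next
    case 2
    then have "\<not> collinear Bs {f x, f y, f z}"
      using design_automorphism_collinear_iff[OF f, of "{x,y,z}"] by simp
    then show ?thesis using 2 inj swp_not_collinear by metis
  next
    case 3
    note moved = swp_collinear_block[OF 3]
    have "f ` {x,y,z,swp Bs x y z} \<in> Bs" using design_automorphism_image[OF f moved(1)] .
    then have "{f x, f y, f z, f (swp Bs x y z)} \<in> Bs" by simp
    then show ?thesis by (rule swp_eq_fourth_point) (use 3 moved inj in auto)
  qed
qed

lemma design_automorphism_conj_swp:
  assumes "design_automorphism Bs f"
  shows "f \<circ> swp Bs x y \<circ> inv f = swp Bs (f x) (f y)"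
proof
  fix w
  have "f (inv f w) = w"
    using bij_is_surj[OF design_automorphism_bij[OF assms]] by (simp add: surj_f_inv_f)
  then show "(f \<circ> swp Bs x y \<circ> inv f) w = swp Bs (f x) (f y) w"
    using swp_apply_design_automorphism[OF assms, of x y "inv f w"] by simp
qed

end

locale triangle_two_graph_design = supersimple_block_design +
  assumes triangle: "prop_triangle Bs"
    and two_graph: "\<And>F. F \<subseteq> Omega \<Longrightarrow> card F = 4 \<Longrightarrow>
      card {T\<in>collinear_triples Bs. T \<subseteq> F} \<in> {0,2,4}"
begin

lemma block_symmetric_difference:
  assumes "{u,v,x,y} \<in> Bs" "{u,v,z,w} \<in> Bs" "distinct [u,v,x,y,z,w]"
  shows "{x,y,z,w} \<in> Bs"
proof -
  have "card ({u,v,x,y} \<inter> {u,v,z,w}) = 2" using assms(3) by (simp add: insert_commute)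
  then have "({u,v,x,y} - {u,v,z,w}) \<union> ({u,v,z,w} - {u,v,x,y}) \<in> Bs"
    using triangle assms(1,2) unfolding prop_triangle_def by blast
  moreover have "({u,v,x,y} - {u,v,z,w}) \<union> ({u,v,z,w} - {u,v,x,y}) = {x,y,z,w}"
    using assms(3) by auto
  ultimately show ?thesis by simp
qed

lemma card_collinear_faces:
  assumes "distinct [w,x,y,z]" "{w,x,y,z} \<subseteq> Omega"
  shows "card {t \<in> {{x,y,z},{w,y,z},{w,x,z},{w,x,y}}. collinear Bs t} \<in> {0,2,4}"
proof -
  have "{T\<in>collinear_triples Bs. T \<subseteq> {w,x,y,z}} =
    {t \<in> {{x,y,z},{w,y,z},{w,x,z},{w,x,y}}. collinear Bs t}" (is "?C = ?F")
  proof
    show "?C \<subseteq> ?F"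
    proof
      fix T assume "T \<in> ?C"
      then have "card T = 3" "collinear Bs T" "T \<subseteq> {w,x,y,z}"
        unfolding collinear_triples_def collinear_def by auto
      then show "T \<in> ?F" using card3_subset_of_4_cases[of T w x y z] assms(1) by auto
    qed
    show "?F \<subseteq> ?C" using assms(1) by (auto simp: collinear_triples_def collinear_def)
  qed
  moreover have "card {w,x,y,z} = 4" using assms(1) by simp
  ultimately show ?thesis using two_graph[OF assms(2)] by simp
qed

lemma collinear_face_if_three_collinear:
  assumes "distinct [w,x,y,z]" "{w,x,y,z} \<subseteq> Omega"
    "collinear Bs {x,y,z}" "collinear Bs {w,y,z}" "collinear Bs {w,x,z}"
  shows "collinear Bs {w,x,y}"
proof (rule ccontr)
  assume "\<not> collinear Bs {w,x,y}"
  then have "{t \<in> {{x,y,z},{w,y,z},{w,x,z},{w,x,y}}. collinear Bs t} = {{x,y,z},{w,y,z},{w,x,z}}"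
    using assms by auto
  moreover have "{x,y,z} \<noteq> {w,y,z}" "{x,y,z} \<noteq> {w,x,z}" "{w,y,z} \<noteq> {w,x,z}"
    using assms(1) by (auto simp: insert_eq_iff)
  then have "card {{x,y,z},{w,y,z},{w,x,z}} = 3" by simp
  ultimately show False using card_collinear_faces[OF assms(1,2)] by simp
qed

lemma collinear_face_if_one_collinear:
  assumes "distinct [w,x,y,z]" "{w,x,y,z} \<subseteq> Omega"
    "collinear Bs {x,y,z}" "\<not> collinear Bs {w,y,z}" "\<not> collinear Bs {w,x,z}"
  shows "collinear Bs {w,x,y}"
proof (rule ccontr)
  assume "\<not> collinear Bs {w,x,y}"
  then have "{t \<in> {{x,y,z},{w,y,z},{w,x,z},{w,x,y}}. collinear Bs t} = {{x,y,z}}"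
    using assms by auto
  then show False using card_collinear_faces[OF assms(1,2)] by simp
qed

end

locale triangle_two_graph_design_pair = triangle_two_graph_design +
  fixes a b
  assumes distinct_pair: "a \<noteq> b" and first_in: "a \<in> Omega" and second_in: "b \<in> Omega"
begin

abbreviation s where "s \<equiv> swp Bs a b"

lemma s_s: "s (s x) = x"
  using swp_swp[OF distinct_pair] .

lemma inj_s: "inj s"
  by (metis injI s_s)

lemmas s_collinear_block = swp_collinear_block[OF distinct_pair]

lemma s_not_in_line:
  assumes "M \<in> Bs" "a \<in> M" "b \<notin> M" "x \<in> M" "x \<noteq> a" "collinear Bs {a,b,x}"
  shows "s x \<notin> M"
proof
  assume sx: "s x \<in> M"
  have L: "{a,b,x,s x} \<in> Bs" "s x \<notin> {a,b,x}"
    using s_collinear_block[OF _ _ assms(6)] assms(3,4,5) by auto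
  have "M = {a,b,x,s x}"
    by (rule block_eq_if_three_common[OF assms(1) L(1), of a x "s x"]) (use assms sx L in auto)
  then show False using assms(3) by auto
qed

lemma no_point_collinear_absurd:
  assumes M: "M = {a,p,q,r}" "M \<in> Bs" "distinct [a,p,q,r]" "b \<notin> M"
    and np: "\<not> collinear Bs {a,b,p}" and nq: "\<not> collinear Bs {a,b,q}"
    and nr: "\<not> collinear Bs {a,b,r}"
  shows False
proof -
  have in_Omega: "{b,p,q,a} \<subseteq> Omega" using block_subset[OF M(2)] M(1) first_in second_in by auto
  have "collinear Bs {p,q,a}" by (rule collinearI[OF M(2)]) (use M(1) in auto)
  moreover have "\<not> collinear Bs {b,q,a}" "\<not> collinear Bs {b,p,a}"
    using nq np by (simp_all add: insert_commute)
  ultimately have "collinear Bs {b,p,q}"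
    by (intro collinear_face_if_one_collinear[OF _ in_Omega]) (use M in auto)
  then obtain N where N: "N \<in> Bs" "{b,p,q} \<subseteq> N" unfolding collinear_def by blast
  obtain t where t: "N = {b,p,q,t}" "t \<notin> {b,p,q}"
    by (rule block_fourth_point[OF N]) (use M in auto)
  have ta: "t \<noteq> a"
  proof
    assume "t = a"
    then have "N = M" by (intro block_eq_if_three_common[OF N(1) M(2), of a p q]) (use M t in auto)
    then show False using M t by auto
  qed
  have tr: "t \<noteq> r"
  proof
    assume "t = r"
    then have "N = M" by (intro block_eq_if_three_common[OF N(1) M(2), of p q r]) (use M t in auto)
    then show False using M t by auto
  qed
  have "{p,q,a,r} \<in> Bs" "{p,q,b,t} \<in> Bs"
    using M(1,2) N(1) t(1) by (simp_all add: insert_commute)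
  then have "{a,r,b,t} \<in> Bs" by (rule block_symmetric_difference) (use M t ta tr in auto)
  then have "collinear Bs {a,b,r}" by (rule collinearI) auto
  then show False using nr by simp
qed

lemma image_line_one_collinear:
  assumes M: "M = {a,p,q,r}" "M \<in> Bs" "distinct [a,p,q,r]" "b \<notin> M"
    and cp: "collinear Bs {a,b,p}" and nq: "\<not> collinear Bs {a,b,q}"
    and nr: "\<not> collinear Bs {a,b,r}"
  shows "s ` M \<in> Bs"
proof -
  have Lp: "{a,b,p,s p} \<in> Bs" "s p \<notin> {a,b,p}" using s_collinear_block[OF _ _ cp] M by auto
  have pM: "s p \<notin> M" by (rule s_not_in_line[OF M(2) _ M(4) _ _ cp]) (use M in auto)
  have "{a,p,q,r} \<in> Bs" "{a,p,b,s p} \<in> Bs" using M Lp(1) by (simp_all add: insert_commute)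
  then have "{q,r,b,s p} \<in> Bs" by (rule block_symmetric_difference) (use M Lp pM in auto)
  moreover have "s ` M = {q,r,b,s p}"
    using M swp_not_collinear[OF _ _ nq] swp_not_collinear[OF _ _ nr] swp_first[OF distinct_pair]
    by auto
  ultimately show ?thesis by simp
qed

text \<open>Applying (\<triangle>) three times yields a line through b, r and p, so the three
  triples {b,r,p}, {a,r,p}, {a,b,p} of {a,b,p,r} are collinear, and the two-graph
  condition forces {a,b,r} to be collinear as well.\<close>
lemma two_points_collinear_absurd:
  assumes M: "M = {a,p,q,r}" "M \<in> Bs" "distinct [a,p,q,r]" "b \<notin> M"
    and cp: "collinear Bs {a,b,p}" and cq: "collinear Bs {a,b,q}"
    and nr: "\<not> collinear Bs {a,b,r}"
  shows False
proof -
  have Lp: "{a,b,p,s p} \<in> Bs" "s p \<notin> {a,b,p}" using s_collinear_block[OF _ _ cp] M by auto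
  have Lq: "{a,b,q,s q} \<in> Bs" "s q \<notin> {a,b,q}" using s_collinear_block[OF _ _ cq] M by auto
  have pM: "s p \<notin> M" by (rule s_not_in_line[OF M(2) _ M(4) _ _ cp]) (use M in auto)
  have qM: "s q \<notin> M" by (rule s_not_in_line[OF M(2) _ M(4) _ _ cq]) (use M in auto)
  have pq: "s p \<noteq> s q" using M(3) inj_s by (auto dest: injD)
  have "{a,p,q,r} \<in> Bs" "{a,p,b,s p} \<in> Bs" using M Lp(1) by (simp_all add: insert_commute)
  then have "{q,r,b,s p} \<in> Bs" by (rule block_symmetric_difference) (use M Lp pM in auto)
  then have "{b,q,r,s p} \<in> Bs" by (simp add: insert_commute)
  moreover have "{b,q,a,s q} \<in> Bs" using Lq(1) by (simp add: insert_commute)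
  ultimately have "{r,s p,a,s q} \<in> Bs"
    by (rule block_symmetric_difference) (use M Lp Lq pM qM pq distinct_pair in auto)
  then have "{a,s p,r,s q} \<in> Bs" by (simp add: insert_commute)
  moreover have "{a,s p,b,p} \<in> Bs" using Lp(1) by (simp add: insert_commute)
  ultimately have "{r,s q,b,p} \<in> Bs"
    by (rule block_symmetric_difference) (use M Lp Lq pM qM pq distinct_pair in auto)
  then have "collinear Bs {b,r,p}" by (rule collinearI) auto
  moreover have "collinear Bs {a,r,p}" by (rule collinearI[OF M(2)]) (use M(1) in auto)
  moreover have "{a,b,r,p} \<subseteq> Omega" using block_subset[OF M(2)] M(1) first_in second_in by auto
  ultimately have "collinear Bs {a,b,r}"
    by (intro collinear_face_if_three_collinear[OF _ _ _ _ cp]) (use M distinct_pair in auto)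
  then show False using nr by simp
qed

lemma image_line_all_collinear:
  assumes M: "M = {a,p,q,r}" "M \<in> Bs" "distinct [a,p,q,r]" "b \<notin> M"
    and cp: "collinear Bs {a,b,p}" and cq: "collinear Bs {a,b,q}"
    and cr: "collinear Bs {a,b,r}"
  shows "s ` M \<in> Bs"
proof -
  have Lp: "{a,b,p,s p} \<in> Bs" "s p \<notin> {a,b,p}" using s_collinear_block[OF _ _ cp] M by auto
  have Lq: "{a,b,q,s q} \<in> Bs" "s q \<notin> {a,b,q}" using s_collinear_block[OF _ _ cq] M by auto
  have Lr: "{a,b,r,s r} \<in> Bs" "s r \<notin> {a,b,r}" using s_collinear_block[OF _ _ cr] M by auto
  have pM: "s p \<notin> M" by (rule s_not_in_line[OF M(2) _ M(4) _ _ cp]) (use M in auto)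
  have qM: "s q \<notin> M" by (rule s_not_in_line[OF M(2) _ M(4) _ _ cq]) (use M in auto)
  have rM: "s r \<notin> M" by (rule s_not_in_line[OF M(2) _ M(4) _ _ cr]) (use M in auto)
  have pq: "s p \<noteq> s q" "s p \<noteq> s r" "s q \<noteq> s r" using M(3) inj_s by (auto dest: injD)
  have "{a,p,q,r} \<in> Bs" "{a,p,b,s p} \<in> Bs" using M Lp(1) by (simp_all add: insert_commute)
  then have "{q,r,b,s p} \<in> Bs" by (rule block_symmetric_difference) (use M Lp pM in auto)
  then have "{b,q,r,s p} \<in> Bs" by (simp add: insert_commute)
  moreover have "{b,q,a,s q} \<in> Bs" using Lq(1) by (simp add: insert_commute)
  ultimately have "{r,s p,a,s q} \<in> Bs"
    by (rule block_symmetric_difference) (use M Lp Lq pM qM pq distinct_pair in auto)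
  then have "{a,r,s p,s q} \<in> Bs" by (simp add: insert_commute)
  moreover have "{a,r,b,s r} \<in> Bs" using Lr(1) by (simp add: insert_commute)
  ultimately have "{s p,s q,b,s r} \<in> Bs"
    by (rule block_symmetric_difference) (use M Lp Lq Lr pM qM rM pq distinct_pair in auto)
  moreover have "s ` M = {s p,s q,b,s r}" using M swp_first[OF distinct_pair] by auto
  ultimately show ?thesis by simp
qed

lemma image_line_through_first:
  assumes "M \<in> Bs" "a \<in> M" "b \<notin> M"
  shows "s ` M \<in> Bs"
proof -
  obtain p q r where pqr: "M = {a,p,q,r}" "distinct [a,p,q,r]"
    using block_through_point[OF assms(1,2)] by blast
  have perm: "M = {a,p,r,q}" "M = {a,q,r,p}" "M = {a,q,p,r}" "M = {a,r,p,q}" using pqr(1) by auto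
  have perm_distinct: "distinct [a,p,r,q]" "distinct [a,q,r,p]" "distinct [a,q,p,r]" "distinct [a,r,p,q]"
    using pqr(2) by auto
  note H = assms(1) assms(3)
  show ?thesis
  proof (cases "collinear Bs {a,b,p}"; cases "collinear Bs {a,b,q}"; cases "collinear Bs {a,b,r}")
  qed (use no_point_collinear_absurd[OF pqr(1) H(1) pqr(2) H(2)]
      image_line_one_collinear[OF pqr(1) H(1) pqr(2) H(2)]
      image_line_one_collinear[OF perm(3) H(1) perm_distinct(3) H(2)]
      image_line_one_collinear[OF perm(4) H(1) perm_distinct(4) H(2)]
      two_points_collinear_absurd[OF pqr(1) H(1) pqr(2) H(2)]
      two_points_collinear_absurd[OF perm(1) H(1) perm_distinct(1) H(2)]
      two_points_collinear_absurd[OF perm(2) H(1) perm_distinct(2) H(2)]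
      image_line_all_collinear[OF pqr(1) H(1) pqr(2) H(2)] in blast)+
qed

text \<open>Here the line K through a, x, y is disjoint from M apart from {x,y}, so (\<triangle>)
  gives a second line {a,t,z,w} through a; both are mapped to lines by the previous
  lemma, and (\<triangle>) applied to their images yields the image of M.\<close>
lemma image_line_avoiding_pair_collinear:
  assumes M: "M = {x,y,z,w}" "M \<in> Bs" "distinct [x,y,z,w]" "a \<notin> M" "b \<notin> M"
    and cxy: "collinear Bs {a,x,y}"
  shows "s ` M \<in> Bs"
proof -
  obtain K where K: "K \<in> Bs" "{a,x,y} \<subseteq> K" using cxy unfolding collinear_def by blast
  obtain t where t: "K = {a,x,y,t}" "t \<notin> {a,x,y}"
    by (rule block_fourth_point[OF K]) (use M in auto)
  have tz: "t \<noteq> z"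
  proof
    assume "t = z"
    then have "K = M" by (intro block_eq_if_three_common[OF K(1) M(2), of x y z]) (use M t in auto)
    then show False using M t by auto
  qed
  have tw: "t \<noteq> w"
  proof
    assume "t = w"
    then have "K = M" by (intro block_eq_if_three_common[OF K(1) M(2), of x y w]) (use M t in auto)
    then show False using M t by auto
  qed
  have "{x,y,a,t} \<in> Bs" "{x,y,z,w} \<in> Bs" using K(1) t(1) M(1,2) by (simp_all add: insert_commute)
  then have K': "{a,t,z,w} \<in> Bs" by (rule block_symmetric_difference) (use M t tz tw in auto)
  show ?thesis
  proof (cases "t = b")
    case True
    have "{a,b,x,y} \<in> Bs" "{a,b,y,x} \<in> Bs" "{a,b,z,w} \<in> Bs" "{a,b,w,z} \<in> Bs"
      using K(1) t(1) K' True by (simp_all add: insert_commute)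
    then have "s x = y" "s y = x" "s z = w" "s w = z"
      using M distinct_pair by (auto intro!: swp_eq_fourth_point)
    then have "s ` M = M" using M(1) by auto
    then show ?thesis using M(2) by simp
  next
    case False
    have "s ` {a,x,y,t} \<in> Bs" by (rule image_line_through_first) (use K t M False distinct_pair in auto)
    then have "{b, s t, s x, s y} \<in> Bs" using swp_first[OF distinct_pair] by (simp add: insert_commute)
    moreover have "s ` {a,t,z,w} \<in> Bs"
      by (rule image_line_through_first[OF K']) (use M False distinct_pair in auto)
    then have "{b, s t, s z, s w} \<in> Bs" using swp_first[OF distinct_pair] by (simp add: insert_commute)
    moreover have "distinct [a,t,x,y,z,w]" using M t tz tw by auto
    then have "distinct (map s [a,t,x,y,z,w])" by (meson distinct_map inj_s inj_on_subset subset_UNIV)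
    then have "distinct [b, s t, s x, s y, s z, s w]" using swp_first[OF distinct_pair] by simp
    ultimately have "{s x, s y, s z, s w} \<in> Bs" by (rule block_symmetric_difference)
    then show ?thesis using M(1) by simp
  qed
qed

lemma image_line_avoiding_pair:
  assumes "M \<in> Bs" "a \<notin> M" "b \<notin> M"
  shows "s ` M \<in> Bs"
proof -
  obtain p q r w where M: "M = {p,q,r,w}" "distinct [p,q,r,w]" using block_elements[OF assms(1)] by blast
  have in_Omega: "{a,q,r,p} \<subseteq> Omega" using block_subset[OF assms(1)] M first_in by auto
  consider "collinear Bs {a,p,q}" | "collinear Bs {a,p,r}" | "collinear Bs {a,q,r}"
  proof (cases "collinear Bs {a,p,q} \<or> collinear Bs {a,p,r}")
    case False
    have "collinear Bs {q,r,p}" by (rule collinearI[OF assms(1)]) (use M in auto)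
    moreover have "\<not> collinear Bs {a,r,p}" "\<not> collinear Bs {a,q,p}"
      using False by (simp_all add: insert_commute)
    ultimately have "collinear Bs {a,q,r}"
      by (intro collinear_face_if_one_collinear[OF _ in_Omega]) (use M assms in auto)
    then show ?thesis using that by blast
  qed (use that in blast)
  then show ?thesis
  proof cases
    case 1
    then show ?thesis using image_line_avoiding_pair_collinear[OF M(1) assms(1) M(2) assms(2,3)] by blast
  next
    case 2
    have "M = {p,r,q,w}" "distinct [p,r,q,w]" using M by auto
    then show ?thesis using image_line_avoiding_pair_collinear 2 assms by blast
  next
    case 3
    have "M = {q,r,p,w}" "distinct [q,r,p,w]" using M by auto
    then show ?thesis using image_line_avoiding_pair_collinear 3 assms by blast
  qed
qed

lemma image_line:
  assumes M: "M \<in> Bs"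
  shows "s ` M \<in> Bs"
proof -
  interpret swapped: triangle_two_graph_design_pair Omega Bs b a
    using distinct_pair first_in second_in by unfold_locales auto
  consider "a \<in> M" "b \<in> M" | "a \<in> M" "b \<notin> M" | "a \<notin> M" "b \<in> M" | "a \<notin> M" "b \<notin> M"
    by blast
  then show ?thesis
  proof cases
    case 1
    obtain x y where xy: "M = {a,b,x,y}" "distinct [a,b,x,y]"
      using block_through_two_points[OF M 1 distinct_pair] by blast
    have "{a,b,y,x} \<in> Bs" using M xy(1) by (simp add: insert_commute)
    then have "s x = y" "s y = x" using M xy by (auto intro!: swp_eq_fourth_point)
    then have "s ` M = M" using xy(1) swp_first[OF distinct_pair] swp_second[OF distinct_pair] by auto
    then show ?thesis using M by simp
  next
    case 2
    then show ?thesis using image_line_through_first M by blast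
  next
    case 3
    then show ?thesis using swapped.image_line_through_first[OF M] swp_commute by metis
  next
    case 4
    then show ?thesis using image_line_avoiding_pair M by blast
  qed
qed

end

lemma (in triangle_two_graph_design) swp_design_automorphism:
  assumes "a \<in> Omega" "b \<in> Omega"
  shows "design_automorphism Bs (swp Bs a b)"
proof (cases "a = b")
  case True
  then show ?thesis using design_automorphism_id swp_refl by simp
next
  case False
  interpret triangle_two_graph_design_pair Omega Bs a b
    using assms False by unfold_locales
  show ?thesis by (rule involution_design_automorphism) (use s_s image_line in auto)
qed

theorem lemma4p6:
  fixes Omega :: "'a set" and Bs :: "'a set set" and lam :: nat
  assumes "two_design Omega 4 Bs lam"
    and "supersimple Bs"
    and "prop_triangle Bs"
    and "regular_two_graph Omega (collinear_triples Bs)"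
    and "g \<in> gen_group {swp Bs a b | a b. a \<in> Omega \<and> b \<in> Omega}"
    and "x \<in> Omega" and "y \<in> Omega"
  shows "g \<circ> swp Bs x y \<circ> inv g = swp Bs (g x) (g y)"
proof -
  interpret triangle_two_graph_design Omega Bs
    using assms(1-4) by unfold_locales (auto simp: two_design_def regular_two_graph_def)
  have "design_automorphism Bs g"
    using gen_group_design_automorphism[OF _ assms(5)] swp_design_automorphism by blast
  then show ?thesis by (rule design_automorphism_conj_swp)
qed

end
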